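(* Let $n>d\ge 1$. Let $(x_i)_{i=1}^n$ be i.i.d. with $x_i\sim N(0,I_d)$, let $\bar{x}_i=(1,x_i^{\top})^{\top}\in\mathbb{R}^{d+1}$, and suppose the responses $y_1,\dots,y_n\in\{-1,1\}$ are conditionally independent given $(x_i)_{i=1}^n$ with $\frac{y_i+1}{2}\,\big|\,x_i\sim\mathrm{Bernoulli}(\Phi(\bar{x}_i\cdot\bar{\beta}))$ for some fixed $\bar{\beta}=(\beta_0,\beta^{\top})$, $\beta_0\in\mathbb{R}$, $\beta\in\mathbb{R}^d$. Let $\gamma_0=|\beta|$ (so $\gamma_0^2=\mathrm{Var}(x_i\cdot\beta)$), let $Z\sim N(0,1)$ and $h=\mathbb{E}[\Phi(-|\beta_0+\gamma_0Z|)]$ (so $h>0$), and let $$s^*=\inf_{u\in\mathbb{S}^d}\sum_{i=1}^n\mathds{1}_{(-\infty,0]}(y_i\bar{x}_i\cdot u).$$ Then for every $\epsilon>0$, with probability at least $1-\exp(-2\epsilon^2 n)$, $$s^*\ge n\Bigg(h-\epsilon-\bigg(\frac{2\ln(en/(d+1))}{n/(d+1)}\bigg)^{1/2}\Bigg).$$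
   Context: $\Phi$ denotes the standard normal c.d.f. and $\mathbb{S}^d=\{v\in\mathbb{R}^{d+1}:|v|=1\}$. *)

theory Defs
  imports "HOL-Probability.Probability"
begin

definition std_normal :: "real measure" where
  "std_normal = density lborel std_normal_density"

definition Phi :: "real \<Rightarrow> real" where
  "Phi t = measure std_normal {..t}"

(* N(0, I_d) on R^d, with d = CARD('d) *)
definition gauss_vec :: "(real^'d) measure" where
  "gauss_vec = density lborel (\<lambda>x. \<Prod>i\<in>UNIV. std_normal_density (x $ i))"

definition probit_pair :: "real \<Rightarrow> real^'d \<Rightarrow> ((real^'d) \<times> real) measure" where
  "probit_pair \<beta>0 \<beta> = bind gauss_vec
     (\<lambda>x. distr (measure_pmf (bernoulli_pmf (Phi (\<beta>0 + x \<bullet> \<beta>)))) borel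
                (\<lambda>b. (x, if b then 1 else -1)))"

definition probit_sample :: "nat \<Rightarrow> real \<Rightarrow> real^'d \<Rightarrow> (nat \<Rightarrow> (real^'d) \<times> real) measure" where
  "probit_sample n \<beta>0 \<beta> = PiM {..<n} (\<lambda>_. probit_pair \<beta>0 \<beta>)"

definition sstar :: "nat \<Rightarrow> (nat \<Rightarrow> (real^'d) \<times> real) \<Rightarrow> real" where
  "sstar n \<omega> = (INF u\<in>sphere (0::real \<times> (real^'d)) 1.
      real (card {i\<in>{..<n}. snd (\<omega> i) * ((1, fst (\<omega> i)) \<bullet> u) \<le> 0}))"

end

theory Submission
  imports Defs
begin

(* Fix a countable dense set Dn of directions in R x R^d.  For every direction u some d in Dn
   misclassifies at most the points u misclassifies, so s^* < c forces one of the sign patterns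
   cut out by Dn to have fewer than c mismatches with the labels.  By Pajor's form of the
   Sauer-Shelah lemma at most N = (e n / (d+1))^(d+1) patterns occur.  Given the x_i, the
   mismatches for a fixed pattern are independent and each has probability at least
   q(x_i) = Phi(-|beta0 + x_i . beta|), so E[exp (-l #mismatches) | x] <= prod_i (1 - (1 - e^-l) q(x_i));
   since x_i . beta ~ |beta| Z, averaging over x gives (1 - (1 - e^-l) h)^n.  Markov's inequality
   for the sum over patterns, Hoeffding's lemma and N <= exp (2 n delta^2) then give the bound. *)

section \<open>Shattering and halfspace sign patterns\<close>

definition shatters :: "'a set set \<Rightarrow> 'a set \<Rightarrow> bool" where
  "shatters F T \<longleftrightarrow> (\<forall>P\<subseteq>T. \<exists>A\<in>F. A \<inter> T = P)"

lemma shatters_empty_iff [simp]: "shatters F {} \<longleftrightarrow> F \<noteq> {}"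
  by (auto simp: shatters_def)

lemma shatters_image_Diff:
  assumes "shatters ((\<lambda>A. A - {x}) ` F) T" "x \<notin> T"
  shows "shatters F T"
  unfolding shatters_def
proof (intro allI impI)
  fix P assume "P \<subseteq> T"
  then obtain A where "A \<in> F" "(A - {x}) \<inter> T = P"
    using assms(1) unfolding shatters_def by blast
  with assms(2) show "\<exists>A\<in>F. A \<inter> T = P" by blast
qed

lemma shatters_insert:
  assumes "shatters {B\<in>F. x \<notin> B \<and> insert x B \<in> F} T" "x \<notin> T"
  shows "shatters F (insert x T)"
  unfolding shatters_def
proof (intro allI impI)
  fix P assume P: "P \<subseteq> insert x T"
  then have "P - {x} \<subseteq> T" by blast
  then obtain B where B: "B \<in> F" "x \<notin> B" "insert x B \<in> F" "B \<inter> T = P - {x}"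
    using assms(1) unfolding shatters_def by blast
  show "\<exists>A\<in>F. A \<inter> insert x T = P"
  proof (cases "x \<in> P")
    case True
    then have "insert x B \<inter> insert x T = P" using B(4) by blast
    then show ?thesis using B(3) by blast
  next
    case False
    then have "B \<inter> insert x T = P" using B(2,4) P by blast
    then show ?thesis using B(1) by blast
  qed
qed

lemma card_image_Diff_add_card:
  assumes "finite F"
  shows "card ((\<lambda>A. A - {x}) ` F) + card {B\<in>F. x \<notin> B \<and> insert x B \<in> F} = card F"
proof -
  define Fa where "Fa = {A\<in>F. x \<notin> A}"
  define Fb where "Fb = {A\<in>F. x \<in> A}"
  have F: "F = Fa \<union> Fb" "Fa \<inter> Fb = {}" by (auto simp: Fa_def Fb_def)
  have fin: "finite Fa" "finite Fb" using assms by (auto simp: Fa_def Fb_def)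
  have inj: "inj_on (\<lambda>A. A - {x}) Fb"
    by (rule inj_onI) (metis Fb_def insert_Diff mem_Collect_eq)
  have "(\<lambda>A. A - {x}) ` Fa = Fa" by (force simp: Fa_def)
  then have "(\<lambda>A. A - {x}) ` F = Fa \<union> (\<lambda>A. A - {x}) ` Fb"
    by (subst F(1)) (simp only: image_Un)
  moreover have "{B\<in>F. x \<notin> B \<and> insert x B \<in> F} = Fa \<inter> (\<lambda>A. A - {x}) ` Fb"
  proof (intro set_eqI iffI)
    fix B assume B: "B \<in> {B\<in>F. x \<notin> B \<and> insert x B \<in> F}"
    then have "B = insert x B - {x}" "insert x B \<in> Fb" by (auto simp: Fb_def)
    with B show "B \<in> Fa \<inter> (\<lambda>A. A - {x}) ` Fb" unfolding Fa_def by blast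
  next
    fix B assume "B \<in> Fa \<inter> (\<lambda>A. A - {x}) ` Fb"
    then obtain A where "B \<in> F" "x \<notin> B" "A \<in> F" "x \<in> A" "B = A - {x}"
      unfolding Fa_def Fb_def by blast
    then show "B \<in> {B\<in>F. x \<notin> B \<and> insert x B \<in> F}" by (simp add: insert_absorb)
  qed
  moreover have "card F = card Fa + card Fb"
    using F fin by (simp add: card_Un_disjoint)
  ultimately show ?thesis
    using card_Un_Int[of Fa "(\<lambda>A. A - {x}) ` Fb"] fin card_image[OF inj] by simp
qed

lemma card_le_card_shattered:
  assumes "finite S" "F \<subseteq> Pow S"
  shows "card F \<le> card {T. T \<subseteq> S \<and> shatters F T}"
  using assms
proof (induction S arbitrary: F rule: finite_induct)
  case empty
  then have "F \<subseteq> {{}}" by auto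
  then consider "F = {}" | "F = {{}}" by blast
  then show ?case
  proof cases
    case 2
    then have "{T. T \<subseteq> {} \<and> shatters F T} = {{}}" by auto
    with 2 show ?thesis by simp
  qed simp
next
  case (insert x S)
  define F0 where "F0 = (\<lambda>A. A - {x}) ` F"
  define F1 where "F1 = {B\<in>F. x \<notin> B \<and> insert x B \<in> F}"
  define Sh where "Sh G = {T. T \<subseteq> S \<and> shatters G T}" for G
  have "finite F" using insert.prems insert.hyps(1) by (metis finite_Pow_iff finite_insert finite_subset)
  have "F0 \<subseteq> Pow S" "F1 \<subseteq> Pow S" using insert.prems by (auto simp: F0_def F1_def)
  then have IH: "card F0 \<le> card (Sh F0)" "card F1 \<le> card (Sh F1)"
    unfolding Sh_def by (auto intro: insert.IH)
  have fin: "finite (Sh G)" for G using insert.hyps(1) by (auto simp: Sh_def)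
  have x_notin: "x \<notin> T" if "T \<in> Sh G" for T G using that insert.hyps(2) by (auto simp: Sh_def)
  have inj: "inj_on (insert x) (Sh F1)"
    by (rule inj_onI) (metis Diff_insert_absorb x_notin)
  have "shatters F T" if "T \<in> Sh F0" for T
    using shatters_image_Diff[of x F T] x_notin[OF that] that unfolding Sh_def F0_def by blast
  moreover have "shatters F (insert x T)" if "T \<in> Sh F1" for T
    using shatters_insert[of F x T] x_notin[OF that] that unfolding Sh_def F1_def by blast
  ultimately have sub: "Sh F0 \<union> insert x ` Sh F1 \<subseteq> {T. T \<subseteq> insert x S \<and> shatters F T}"
    by (auto simp: Sh_def)
  have "card F = card F0 + card F1"
    using card_image_Diff_add_card[OF \<open>finite F\<close>] by (simp add: F0_def F1_def)
  also have "\<dots> \<le> card (Sh F0) + card (insert x ` Sh F1)"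
    using IH card_image[OF inj] by simp
  also have "\<dots> = card (Sh F0 \<union> insert x ` Sh F1)"
    using fin x_notin by (subst card_Un_disjoint) auto
  also have "\<dots> \<le> card {T. T \<subseteq> insert x S \<and> shatters F T}"
    by (rule card_mono[OF _ sub]) (use insert.hyps(1) in auto)
  finally show ?case .
qed

lemma card_subsets_card_le:
  assumes "finite S"
  shows "card {T. T \<subseteq> S \<and> card T \<le> k} = (\<Sum>i\<le>k. card S choose i)"
proof -
  have "{T. T \<subseteq> S \<and> card T \<le> k} = (\<Union>i\<le>k. {T. T \<subseteq> S \<and> card T = i})" by auto
  moreover have "card (\<Union>i\<le>k. {T. T \<subseteq> S \<and> card T = i}) = (\<Sum>i\<le>k. card {T. T \<subseteq> S \<and> card T = i})"
    by (rule card_UN_disjoint) (use assms in auto)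
  ultimately show ?thesis using n_subsets[OF assms] by simp
qed

lemma sum_binomial_le_exp_power:
  assumes "1 \<le> k" "k \<le> n"
  shows "(\<Sum>i\<le>k. real (n choose i)) \<le> (exp 1 * real n / real k) ^ k"
proof -
  define r where "r = real k / real n"
  have r: "0 < r" "r \<le> 1" using assms by (auto simp: r_def)
  have "(\<Sum>i\<le>k. real (n choose i)) * r ^ k \<le> (\<Sum>i\<le>k. real (n choose i) * r ^ i)"
    unfolding sum_distrib_right by (intro sum_mono mult_left_mono power_decreasing) (use r in auto)
  also have "\<dots> \<le> (\<Sum>i\<le>n. real (n choose i) * r ^ i)"
    by (intro sum_mono2) (use assms r in auto)
  also have "\<dots> = (r + 1) ^ n"
    by (subst binomial_ring) simp
  also have "\<dots> \<le> exp r ^ n"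
    by (intro power_mono) (use r in \<open>auto simp: add.commute exp_ge_add_one_self\<close>)
  also have "\<dots> = exp 1 ^ k"
    using assms by (simp add: r_def exp_of_nat_mult[symmetric])
  finally have "(\<Sum>i\<le>k. real (n choose i)) \<le> exp 1 ^ k / r ^ k"
    using r by (simp add: field_simps)
  also have "\<dots> = (exp 1 * real n / real k) ^ k"
    using assms by (simp add: r_def power_divide power_mult_distrib field_simps)
  finally show ?thesis .
qed

lemma exists_nontrivial_relation_pos:
  fixes a :: "'i \<Rightarrow> 'v::euclidean_space"
  assumes "finite T" "DIM('v) < card T"
  shows "\<exists>c. (\<Sum>i\<in>T. c i *\<^sub>R a i) = 0 \<and> (\<exists>i\<in>T. 0 < c i)"
proof -
  have "\<exists>c. (\<Sum>i\<in>T. c i *\<^sub>R a i) = 0 \<and> (\<exists>i\<in>T. c i \<noteq> 0)"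
  proof (cases "inj_on a T")
    case True
    then have "dependent (a ` T)"
      using assms by (intro dependent_biggerset) (simp add: card_image)
    then obtain u where u: "\<exists>v\<in>a ` T. u v \<noteq> 0" "(\<Sum>v\<in>a ` T. u v *\<^sub>R v) = 0"
      using assms(1) by (auto simp: real_vector.dependent_finite)
    then show ?thesis
      using sum.reindex[OF True, of "\<lambda>v. u v *\<^sub>R v"] by (intro exI[of _ "u \<circ> a"]) auto
  next
    case False
    then obtain i j where ij: "i \<in> T" "j \<in> T" "i \<noteq> j" "a i = a j" unfolding inj_on_def by blast
    define c where "c k = (if k = i then 1 else if k = j then -1 else 0::real)" for k
    have "(\<Sum>k\<in>T. c k *\<^sub>R a k) = (\<Sum>k\<in>{i,j}. c k *\<^sub>R a k)"
      using ij assms(1) by (intro sum.mono_neutral_cong_right) (auto simp: c_def)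
    also have "\<dots> = 0" using ij by (simp add: c_def)
    finally show ?thesis using ij by (intro exI[of _ c]) (auto simp: c_def)
  qed
  then obtain c where c: "(\<Sum>i\<in>T. c i *\<^sub>R a i) = 0" "\<exists>i\<in>T. c i \<noteq> 0" by blast
  then have "(\<Sum>i\<in>T. (- c i) *\<^sub>R a i) = 0" by (simp add: sum_negf)
  with c show ?thesis by (metis neg_0_less_iff_less linorder_neqE_linordered_idom)
qed

lemma not_shatters_halfspaces:
  fixes a :: "'i \<Rightarrow> 'v::euclidean_space"
  assumes "finite T" "DIM('v) < card T" "T \<subseteq> I"
  shows "\<not> shatters {{i\<in>I. 0 < a i \<bullet> u} | u. True} T"
proof
  assume sh: "shatters {{i\<in>I. 0 < a i \<bullet> u} | u. True} T"
  obtain c where c: "(\<Sum>i\<in>T. c i *\<^sub>R a i) = 0" and "\<exists>i\<in>T. 0 < c i"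
    using exists_nontrivial_relation_pos[OF assms(1,2)] by blast
  then obtain i0 where i0: "i0 \<in> T" "0 < c i0" by blast
  have "{i\<in>T. 0 < c i} \<subseteq> T" by blast
  then obtain A where "A \<in> {{i\<in>I. 0 < a i \<bullet> u} | u. True}" "A \<inter> T = {i\<in>T. 0 < c i}"
    using sh unfolding shatters_def by blast
  then obtain u where u: "{i\<in>I. 0 < a i \<bullet> u} \<inter> T = {i\<in>T. 0 < c i}" by blast
  have sign: "0 < c i \<longleftrightarrow> 0 < a i \<bullet> u" if "i \<in> T" for i
    using u that assms(3) by blast
  have "0 = (\<Sum>i\<in>T. c i *\<^sub>R a i) \<bullet> u" using c by simp
  also have "\<dots> = (\<Sum>i\<in>T. c i * (a i \<bullet> u))" by (simp add: inner_sum_left)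
  also have "\<dots> > 0"
  proof (rule sum_pos2[OF assms(1) i0(1)])
    show "0 < c i0 * (a i0 \<bullet> u)" using i0 sign by simp
    show "0 \<le> c i * (a i \<bullet> u)" if "i \<in> T" for i
      using sign[OF that] by (cases "0 < c i") (auto intro: mult_nonpos_nonpos)
  qed
  finally show False by simp
qed

lemma card_halfspace_patterns_le:
  fixes a :: "'i \<Rightarrow> 'v::euclidean_space"
  assumes "finite I" "DIM('v) \<le> card I"
  shows "real (card {{i\<in>I. 0 < a i \<bullet> u} | u. True})
           \<le> (exp 1 * real (card I) / real DIM('v)) ^ DIM('v)"
proof -
  let ?F = "{{i\<in>I. 0 < a i \<bullet> u} | u. True}"
  have "card ?F \<le> card {T. T \<subseteq> I \<and> shatters ?F T}"
    by (rule card_le_card_shattered) (use assms in auto)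
  also have "\<dots> \<le> card {T. T \<subseteq> I \<and> card T \<le> DIM('v)}"
  proof (intro card_mono subsetI)
    show "finite {T. T \<subseteq> I \<and> card T \<le> DIM('v)}" using assms(1) by simp
    fix T assume "T \<in> {T. T \<subseteq> I \<and> shatters ?F T}"
    then have T: "T \<subseteq> I" "shatters ?F T" by auto
    moreover have "finite T" using T(1) assms(1) by (rule finite_subset)
    ultimately have "\<not> DIM('v) < card T"
      using not_shatters_halfspaces[where a = a and I = I and T = T] by blast
    with T(1) show "T \<in> {T. T \<subseteq> I \<and> card T \<le> DIM('v)}" by simp
  qed
  also have "\<dots> = (\<Sum>i\<le>DIM('v). card I choose i)"
    using assms(1) by (rule card_subsets_card_le)
  finally have "real (card ?F) \<le> (\<Sum>i\<le>DIM('v). real (card I choose i))"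
    by (simp flip: of_nat_sum)
  also have "\<dots> \<le> (exp 1 * real (card I) / real DIM('v)) ^ DIM('v)"
    by (rule sum_binomial_le_exp_power) (use assms in auto)
  finally show ?thesis .
qed

section \<open>The standard Gaussian\<close>

lemma prob_space_std_normal: "prob_space std_normal"
  unfolding std_normal_def by (rule prob_space_normal_density) simp

lemma sets_std_normal [simp, measurable_cong]: "sets std_normal = sets borel"
  by (simp add: std_normal_def)

lemma space_std_normal [simp]: "space std_normal = UNIV"
  by (simp add: std_normal_def)

lemma Phi_nonneg: "0 \<le> Phi t"
  by (simp add: Phi_def)

lemma Phi_le_1: "Phi t \<le> 1"
  unfolding Phi_def using prob_space.prob_le_1[OF prob_space_std_normal] by blast

lemma Phi_mono: "s \<le> t \<Longrightarrow> Phi s \<le> Phi t"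
  unfolding Phi_def
  by (intro finite_measure.finite_measure_mono[OF prob_space.axioms(1)[OF prob_space_std_normal]]) auto

lemma borel_measurable_Phi [measurable]: "Phi \<in> borel_measurable borel"
  by (rule borel_measurable_mono) (auto simp: mono_def Phi_mono)

lemma distr_std_normal_uminus: "distr std_normal borel uminus = std_normal"
proof -
  have "std_normal = density (distr lborel borel uminus) std_normal_density"
    by (simp add: std_normal_def lborel_distr_uminus)
  also have "\<dots> = distr (density lborel (\<lambda>x. std_normal_density (- x))) borel uminus"
    by (rule density_distr) auto
  also have "(\<lambda>x. ennreal (std_normal_density (- x))) = (\<lambda>x. ennreal (std_normal_density x))"
    by (simp add: normal_density_def)
  finally show ?thesis by (simp add: std_normal_def)
qed

lemma measure_std_normal_singleton: "measure std_normal {s} = 0"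
proof -
  have "AE x in lborel. x \<in> {s} \<longrightarrow> ennreal (std_normal_density x) = 0"
    by (rule eventually_mono[OF AE_lborel_singleton[of s]]) simp
  then have "{s} \<in> null_sets std_normal"
    unfolding std_normal_def by (subst null_sets_density_iff) auto
  then show ?thesis by (simp add: measure_def null_setsD1)
qed

lemma Phi_minus: "Phi (- s) = 1 - Phi s"
proof -
  interpret P: prob_space std_normal by (rule prob_space_std_normal)
  have "Phi (- s) = measure (distr std_normal borel uminus) {..- s}"
    by (simp add: Phi_def distr_std_normal_uminus)
  also have "\<dots> = measure std_normal (uminus -` {..- s})"
    by (subst measure_distr) auto
  also have "uminus -` {..- s} = (UNIV - {..s}) \<union> {s}" by auto
  also have "measure std_normal \<dots> = measure std_normal (UNIV - {..s}) + measure std_normal {s}"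
    by (intro P.finite_measure_Union) auto
  also have "measure std_normal (UNIV - {..s}) = 1 - Phi s"
    using P.prob_compl[of "{..s}"] by (simp add: Phi_def)
  finally show ?thesis by (simp add: measure_std_normal_singleton)
qed

lemma Phi_minus_abs_le: "Phi (- \<bar>s\<bar>) \<le> Phi s" "Phi (- \<bar>s\<bar>) \<le> 1 - Phi s"
  using Phi_minus[of s] Phi_mono[of "- \<bar>s\<bar>" s] Phi_mono[of "- \<bar>s\<bar>" "- s"] by auto

lemma density_PiM_lborel_std_normal:
  assumes "finite I"
  shows "density (PiM I (\<lambda>_. lborel)) (\<lambda>f. \<Prod>i\<in>I. ennreal (std_normal_density (f i)))
           = PiM I (\<lambda>_. std_normal)"
proof -
  interpret S: product_sigma_finite "\<lambda>_. std_normal"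
    unfolding product_sigma_finite_def using prob_space_imp_sigma_finite[OF prob_space_std_normal] by blast
  interpret L: product_sigma_finite "\<lambda>_. lborel"
    unfolding product_sigma_finite_def using lborel.sigma_finite_measure_axioms by blast
  show ?thesis
  proof (rule S.PiM_eqI[OF assms])
    fix A assume A: "\<And>i. i \<in> I \<Longrightarrow> A i \<in> sets std_normal"
    have ind: "indicator (PiE I A) f = (\<Prod>i\<in>I. indicator (A i) (f i) :: ennreal)"
      if "f \<in> space (PiM I (\<lambda>_. lborel))" for f
      using that assms by (auto simp: indicator_def space_PiM PiE_def Pi_def extensional_def)
    have "emeasure (density (PiM I (\<lambda>_. lborel)) (\<lambda>f. \<Prod>i\<in>I. ennreal (std_normal_density (f i)))) (PiE I A)
        = (\<integral>\<^sup>+f. (\<Prod>i\<in>I. ennreal (std_normal_density (f i)) * indicator (A i) (f i)) \<partial>PiM I (\<lambda>_. lborel))"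
      using A by (subst emeasure_density)
        (auto intro!: sets_PiM_I_finite nn_integral_cong simp: ind prod.distrib assms)
    also have "\<dots> = (\<Prod>i\<in>I. \<integral>\<^sup>+x. ennreal (std_normal_density x) * indicator (A i) x \<partial>lborel)"
      using A by (subst L.product_nn_integral_prod) (auto simp: assms)
    also have "\<dots> = (\<Prod>i\<in>I. emeasure std_normal (A i))"
      using A by (intro prod.cong refl) (simp add: std_normal_def emeasure_density)
    finally show "emeasure (density (PiM I (\<lambda>_. lborel)) (\<lambda>f. \<Prod>i\<in>I. ennreal (std_normal_density (f i)))) (PiE I A)
        = (\<Prod>i\<in>I. emeasure std_normal (A i))" .
  qed (simp cong: sets_PiM_cong)
qed

lemma gauss_vec_eq_distr_PiM:
  "(gauss_vec :: (real^'d) measure) = distr (PiM Basis (\<lambda>_. std_normal)) borel (\<lambda>f. \<Sum>b\<in>Basis. f b *\<^sub>R b)"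
proof -
  let ?T = "\<lambda>f. \<Sum>b\<in>(Basis::(real^'d) set). f b *\<^sub>R b"
  let ?g = "\<lambda>x::real^'d. ennreal (\<Prod>i\<in>UNIV. std_normal_density (x $ i))"
  have prod_Basis: "(\<Prod>i\<in>UNIV. std_normal_density (x $ i)) = (\<Prod>b\<in>Basis. std_normal_density (x \<bullet> b))"
    for x :: "real^'d"
  proof -
    have B: "(Basis :: (real^'d) set) = range (\<lambda>i. axis i 1)"
      by (auto simp: Basis_vec_def)
    have inj: "inj (\<lambda>i::'d. axis i (1::real))"
      by (auto simp: inj_def axis_eq_axis)
    show ?thesis
      unfolding B by (subst prod.reindex[OF inj]) (simp add: inner_axis)
  qed
  have "gauss_vec = density (distr (PiM Basis (\<lambda>_. lborel)) borel ?T) ?g"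
    unfolding gauss_vec_def by (subst lborel_eq) simp
  also have "\<dots> = distr (density (PiM Basis (\<lambda>_. lborel)) (\<lambda>f. ?g (?T f))) borel ?T"
    by (rule density_distr) auto
  also have "density (PiM Basis (\<lambda>_. lborel)) (\<lambda>f. ?g (?T f))
     = density (PiM Basis (\<lambda>_. lborel)) (\<lambda>f. \<Prod>b\<in>Basis. ennreal (std_normal_density (f b)))"
  proof (intro density_cong AE_I2)
    fix f :: "real^'d \<Rightarrow> real"
    have "(\<Prod>b\<in>Basis. std_normal_density (?T f \<bullet> b)) = (\<Prod>b\<in>Basis. std_normal_density (f b))"
      by (intro prod.cong) auto
    then show "?g (?T f) = (\<Prod>b\<in>Basis. ennreal (std_normal_density (f b)))"
      by (simp only: prod_Basis) (simp add: prod_ennreal)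
  qed auto
  also have "\<dots> = PiM Basis (\<lambda>_. std_normal)"
    by (rule density_PiM_lborel_std_normal) simp
  finally show ?thesis .
qed

lemma prob_space_gauss_vec: "prob_space gauss_vec"
  unfolding gauss_vec_eq_distr_PiM
  by (intro prob_space.prob_space_distr prob_space_PiM prob_space_std_normal) measurable

lemma sets_gauss_vec [simp, measurable_cong]: "sets gauss_vec = sets borel"
  by (simp add: gauss_vec_def)

lemma space_gauss_vec [simp]: "space gauss_vec = UNIV"
  by (simp add: gauss_vec_def)

lemma distr_PiM_std_normal_component:
  assumes "i \<in> I"
  shows "distr (PiM I (\<lambda>_. std_normal)) borel (\<lambda>f. f i) = std_normal"
proof -
  have "distr (PiM I (\<lambda>_. std_normal)) borel (\<lambda>f. f i) = distr (PiM I (\<lambda>_. std_normal)) std_normal (\<lambda>f. f i)"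
    by (intro distr_cong) auto
  also have "\<dots> = std_normal"
    by (rule distr_PiM_component[OF prob_space_std_normal assms])
  finally show ?thesis .
qed

lemma indep_vars_PiM_std_normal:
  assumes "I \<noteq> {}"
  shows "prob_space.indep_vars (PiM I (\<lambda>_. std_normal)) (\<lambda>_. borel) (\<lambda>i f. f i) I"
proof -
  interpret Q: prob_space "PiM I (\<lambda>_. std_normal)"
    by (intro prob_space_PiM prob_space_std_normal)
  have "distr (PiM I (\<lambda>_. std_normal)) (PiM I (\<lambda>_. borel)) (\<lambda>x. \<lambda>i\<in>I. x i)
      = distr (PiM I (\<lambda>_. std_normal)) (PiM I (\<lambda>_. std_normal)) (\<lambda>x. x)"
    by (intro distr_cong) (auto simp: space_PiM cong: sets_PiM_cong)
  also have "\<dots> = PiM I (\<lambda>i. distr (PiM I (\<lambda>_. std_normal)) borel (\<lambda>f. f i))"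
    by (subst distr_id2) (auto intro!: PiM_cong simp: distr_PiM_std_normal_component)
  finally show ?thesis
    by (subst Q.indep_vars_iff_distr_eq_PiM') (auto intro!: measurable_component_singleton assms)
qed

lemma distributed_PiM_std_normal_weighted_sum:
  assumes "finite J" "J \<noteq> {}" "J \<subseteq> I" "\<And>j. j \<in> J \<Longrightarrow> w j \<noteq> 0"
  shows "distributed (PiM I (\<lambda>_. std_normal)) lborel (\<lambda>f. \<Sum>j\<in>J. w j * f j)
           (normal_density 0 (sqrt (\<Sum>j\<in>J. (w j)\<^sup>2)))"
proof -
  let ?Q = "PiM I (\<lambda>_. std_normal)"
  interpret Q: prob_space ?Q by (intro prob_space_PiM prob_space_std_normal)
  have "I \<noteq> {}" using assms(2,3) by blast
  have ind: "Q.indep_vars (\<lambda>_. borel) (\<lambda>j f. 0 + w j * f j) J"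
    by (rule Q.indep_vars_compose2[where X = "\<lambda>j f. f j" and M' = "\<lambda>_. borel"])
       (auto intro: Q.indep_vars_subset[OF indep_vars_PiM_std_normal[OF \<open>I \<noteq> {}\<close>] assms(3)])
  have "distributed ?Q lborel (\<lambda>f. 0 + w j * f j) (normal_density 0 \<bar>w j\<bar>)" if "j \<in> J" for j
  proof -
    have "distr ?Q lborel (\<lambda>f. f j) = distr ?Q borel (\<lambda>f. f j)"
      by (intro distr_cong) auto
    then have "distributed ?Q lborel (\<lambda>f. f j) std_normal_density"
      using that assms(3) distr_PiM_std_normal_component[of j I]
      by (auto simp: distributed_def std_normal_def intro!: measurable_component_singleton)
    then show ?thesis
      using Q.normal_density_affine[of "\<lambda>f. f j" 0 1 "w j" 0] that assms(4) by simp
  qed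
  from Q.sum_indep_normal[OF assms(1,2) ind _ this] assms(4) show ?thesis by simp
qed

lemma distributed_std_normal_scaled:
  assumes "0 < c"
  shows "distributed std_normal lborel (\<lambda>z. c * z) (normal_density 0 c)"
proof -
  interpret S: prob_space std_normal by (rule prob_space_std_normal)
  have "distributed std_normal lborel (\<lambda>z. z) std_normal_density"
    unfolding distributed_def by (simp add: distr_id2) (simp add: std_normal_def)
  from S.normal_density_affine[OF this, of c 0] show ?thesis using assms by simp
qed

lemma integral_gauss_vec_inner:
  fixes F :: "real \<Rightarrow> real" and \<beta> :: "real^'d"
  assumes [measurable]: "F \<in> borel_measurable borel"
  shows "(\<integral>t. F (t \<bullet> \<beta>) \<partial>gauss_vec) = (\<integral>z. F (norm \<beta> * z) \<partial>std_normal)"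
proof -
  let ?Q = "PiM Basis (\<lambda>_. std_normal) :: (real^'d \<Rightarrow> real) measure"
  define J where "J = {b\<in>Basis. b \<bullet> \<beta> \<noteq> (0::real)}"
  have "(\<integral>t. F (t \<bullet> \<beta>) \<partial>gauss_vec) = (\<integral>f. F ((\<Sum>b\<in>Basis. f b *\<^sub>R b) \<bullet> \<beta>) \<partial>?Q)"
    unfolding gauss_vec_eq_distr_PiM by (subst integral_distr) auto
  also have "(\<lambda>f. (\<Sum>b\<in>Basis. f b *\<^sub>R b) \<bullet> \<beta>) = (\<lambda>f. \<Sum>b\<in>J. (b \<bullet> \<beta>) * f b)"
    unfolding J_def inner_sum_left
    by (intro ext sum.mono_neutral_cong_right) (auto simp: inner_commute)
  finally have L: "(\<integral>t. F (t \<bullet> \<beta>) \<partial>gauss_vec) = (\<integral>f. F (\<Sum>b\<in>J. (b \<bullet> \<beta>) * f b) \<partial>?Q)" .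
  show ?thesis
  proof (cases "\<beta> = 0")
    case True
    then show ?thesis
      unfolding L using prob_space.prob_space[OF prob_space_PiM[OF prob_space_std_normal], of "Basis :: (real^'d) set"]
        prob_space.prob_space[OF prob_space_std_normal]
      by (simp add: J_def)
  next
    case False
    have J: "finite J" "J \<noteq> {}" "J \<subseteq> Basis"
      using False euclidean_all_zero_iff[of \<beta>] by (auto simp: J_def inner_commute)
    have "(\<Sum>b\<in>J. (b \<bullet> \<beta>)\<^sup>2) = (\<Sum>b\<in>Basis. (\<beta> \<bullet> b) * (\<beta> \<bullet> b))"
      by (rule sum.mono_neutral_cong_left) (auto simp: J_def inner_commute power2_eq_square)
    then have "sqrt (\<Sum>b\<in>J. (b \<bullet> \<beta>)\<^sup>2) = norm \<beta>"
      by (simp add: euclidean_inner[of \<beta> \<beta>, symmetric] norm_eq_sqrt_inner)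
    with distributed_PiM_std_normal_weighted_sum[OF J, of "\<lambda>b. b \<bullet> \<beta>"]
    have D1: "distributed ?Q lborel (\<lambda>f. \<Sum>b\<in>J. (b \<bullet> \<beta>) * f b) (normal_density 0 (norm \<beta>))"
      by (simp add: J_def)
    have D2: "distributed std_normal lborel (\<lambda>z. norm \<beta> * z) (normal_density 0 (norm \<beta>))"
      using False by (intro distributed_std_normal_scaled) simp
    have "(\<integral>f. F (\<Sum>b\<in>J. (b \<bullet> \<beta>) * f b) \<partial>?Q) = integral\<^sup>L (distr ?Q lborel (\<lambda>f. \<Sum>b\<in>J. (b \<bullet> \<beta>) * f b)) F"
      using D1 by (subst integral_distr) (auto simp: distributed_def)
    also have "\<dots> = integral\<^sup>L (distr std_normal lborel (\<lambda>z. norm \<beta> * z)) F"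
      using D1 D2 by (simp add: distributed_def)
    also have "\<dots> = (\<integral>z. F (norm \<beta> * z) \<partial>std_normal)"
      using D2 by (subst integral_distr) (auto simp: distributed_def)
    finally show ?thesis unfolding L .
  qed
qed

section \<open>The probit model\<close>

definition probit_kernel :: "real \<Rightarrow> real^'d \<Rightarrow> real^'d \<Rightarrow> ((real^'d) \<times> real) measure" where
  "probit_kernel \<beta>0 \<beta> x = distr (measure_pmf (bernoulli_pmf (Phi (\<beta>0 + x \<bullet> \<beta>)))) borel
     (\<lambda>b. (x, if b then 1 else -1))"

definition probit_cond ::
    "real \<Rightarrow> real^'d \<Rightarrow> ((real^'d) \<times> real \<Rightarrow> ennreal) \<Rightarrow> real^'d \<Rightarrow> ennreal" where
  "probit_cond \<beta>0 \<beta> g t =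
     g (t, 1) * ennreal (Phi (\<beta>0 + t \<bullet> \<beta>)) + g (t, -1) * ennreal (1 - Phi (\<beta>0 + t \<bullet> \<beta>))"

lemma probit_pair_eq_bind: "probit_pair \<beta>0 \<beta> = bind gauss_vec (probit_kernel \<beta>0 \<beta>)"
  unfolding probit_pair_def probit_kernel_def[abs_def] ..

lemma sets_probit_kernel [simp]: "sets (probit_kernel \<beta>0 \<beta> x) = sets borel"
  by (simp add: probit_kernel_def)

lemma prob_space_probit_kernel: "prob_space (probit_kernel \<beta>0 \<beta> x)"
  unfolding probit_kernel_def by (intro prob_space.prob_space_distr prob_space_measure_pmf) auto

lemma nn_integral_probit_kernel:
  assumes "g \<in> borel_measurable borel"
  shows "(\<integral>\<^sup>+y. g y \<partial>probit_kernel \<beta>0 \<beta> x) = probit_cond \<beta>0 \<beta> g x"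
  unfolding probit_kernel_def using assms Phi_nonneg Phi_le_1
  by (subst nn_integral_distr) (auto simp: nn_integral_bernoulli_pmf probit_cond_def)

lemma borel_measurable_probit_cond [measurable]:
  assumes [measurable]: "g \<in> borel_measurable borel"
  shows "probit_cond \<beta>0 \<beta> g \<in> borel_measurable borel"
  unfolding probit_cond_def[abs_def] by measurable

lemma probit_cond_mult_fst:
  "probit_cond \<beta>0 \<beta> (\<lambda>y. c (fst y) * g y) = (\<lambda>t. c t * probit_cond \<beta>0 \<beta> g t)"
  by (simp add: fun_eq_iff probit_cond_def algebra_simps)

lemma probit_kernel_measurable:
  fixes \<beta> :: "real^'d"
  shows "probit_kernel \<beta>0 \<beta> \<in> measurable gauss_vec (subprob_algebra borel)"
proof (rule measurable_subprob_algebra)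
  fix A :: "((real^'d) \<times> real) set" assume [measurable]: "A \<in> sets borel"
  have "emeasure (probit_kernel \<beta>0 \<beta> x) A = probit_cond \<beta>0 \<beta> (indicator A) x" for x
    by (subst nn_integral_probit_kernel[symmetric]) (auto simp: nn_integral_indicator)
  then show "(\<lambda>x. emeasure (probit_kernel \<beta>0 \<beta> x) A) \<in> borel_measurable gauss_vec"
    by (simp cong: measurable_cong_sets)
qed (auto intro: prob_space_imp_subprob_space prob_space_probit_kernel)

lemma sets_probit_pair [simp, measurable_cong]: "sets (probit_pair \<beta>0 \<beta>) = sets borel"
  unfolding probit_pair_eq_bind by (subst sets_bind) auto

lemma prob_space_probit_pair: "prob_space (probit_pair \<beta>0 \<beta>)"
  unfolding probit_pair_eq_bind
  by (rule prob_space.prob_space_bind[OF prob_space_gauss_vec _ probit_kernel_measurable])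
     (simp add: prob_space_probit_kernel)

lemma nn_integral_probit_pair:
  assumes "g \<in> borel_measurable borel"
  shows "(\<integral>\<^sup>+y. g y \<partial>probit_pair \<beta>0 \<beta>) = (\<integral>\<^sup>+t. probit_cond \<beta>0 \<beta> g t \<partial>gauss_vec)"
  unfolding probit_pair_eq_bind
  by (simp add: nn_integral_bind[OF assms probit_kernel_measurable] nn_integral_probit_kernel[OF assms])

lemma measurable_fst_probit_pair: "fst \<in> measurable (probit_pair \<beta>0 \<beta>) gauss_vec"
  by (simp add: borel_prod[symmetric] cong: measurable_cong_sets)

lemma measurable_restrict_fst:
  "(\<lambda>\<omega>. \<lambda>i\<in>I. fst (\<omega> i)) \<in> measurable (PiM I (\<lambda>_. probit_pair \<beta>0 \<beta>)) (PiM I (\<lambda>_. gauss_vec))"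
  by (intro measurable_restrict measurable_compose[OF measurable_component_singleton])
     (auto simp: borel_prod[symmetric] cong: measurable_cong_sets)

lemma nn_integral_probit_pair_fst:
  fixes \<beta> :: "real^'d"
  assumes "c \<in> borel_measurable gauss_vec" "g \<in> borel_measurable borel"
  shows "(\<integral>\<^sup>+y. c (fst y) * g y \<partial>probit_pair \<beta>0 \<beta>) = (\<integral>\<^sup>+t. c t * probit_cond \<beta>0 \<beta> g t \<partial>gauss_vec)"
proof -
  have "(\<lambda>y. c (fst y)) \<in> borel_measurable (probit_pair \<beta>0 \<beta>)"
    using measurable_fst_probit_pair assms(1) by (rule measurable_compose)
  then show ?thesis
    using assms(2) by (subst nn_integral_probit_pair) (simp_all add: probit_cond_mult_fst)
qed

lemma prod_insert_fun_upd:
  assumes "finite I" "i \<notin> I"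
  shows "(\<Prod>j\<in>insert i I. g j ((x(i := y)) j)) = g i y * (\<Prod>j\<in>I. g j (x j))"
proof -
  have "(\<Prod>j\<in>I. g j ((x(i := y)) j)) = (\<Prod>j\<in>I. g j (x j))"
    using assms(2) by (intro prod.cong) auto
  then show ?thesis using assms by simp
qed

lemma borel_measurable_fun_upd:
  assumes "f \<in> borel_measurable (PiM (insert i I) M)" "i \<notin> I" "x \<in> space (PiM I M)"
  shows "(\<lambda>t. f (x(i := t))) \<in> borel_measurable (M i)"
  using measurable_component_update[OF assms(3,2)] assms(1) by (rule measurable_compose)

lemma (in product_sigma_finite) nn_integral_PiM_insert_prod:
  assumes "finite I" "i \<notin> I" "f \<in> borel_measurable (PiM (insert i I) M)"
    and g: "\<And>j. j \<in> insert i I \<Longrightarrow> g j \<in> borel_measurable (M j)"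
  shows "(\<integral>\<^sup>+x. (\<integral>\<^sup>+t. f (x(i := t)) * g i t \<partial>M i) * (\<Prod>j\<in>I. g j (x j)) \<partial>PiM I M)
       = (\<integral>\<^sup>+x. f x * (\<Prod>j\<in>insert i I. g j (x j)) \<partial>PiM (insert i I) M)"
proof -
  have "(\<lambda>x. f x * (\<Prod>j\<in>insert i I. g j (x j))) \<in> borel_measurable (PiM (insert i I) M)"
    using assms(3) g
    by (intro borel_measurable_times_ennreal borel_measurable_prod_ennreal)
       (auto intro: measurable_compose[OF measurable_component_singleton])
  then have "(\<integral>\<^sup>+x. f x * (\<Prod>j\<in>insert i I. g j (x j)) \<partial>PiM (insert i I) M)
      = (\<integral>\<^sup>+x. \<integral>\<^sup>+t. f (x(i := t)) * (\<Prod>j\<in>insert i I. g j ((x(i := t)) j)) \<partial>M i \<partial>PiM I M)"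
    by (rule product_nn_integral_insert[OF assms(1,2)])
  also have "\<dots> = (\<integral>\<^sup>+x. (\<integral>\<^sup>+t. f (x(i := t)) * g i t \<partial>M i) * (\<Prod>j\<in>I. g j (x j)) \<partial>PiM I M)"
  proof (intro nn_integral_cong)
    fix x assume "x \<in> space (PiM I M)"
    from borel_measurable_fun_upd[OF assms(3,2) this]
    have "(\<integral>\<^sup>+t. f (x(i := t)) * g i t * (\<Prod>j\<in>I. g j (x j)) \<partial>M i)
        = (\<integral>\<^sup>+t. f (x(i := t)) * g i t \<partial>M i) * (\<Prod>j\<in>I. g j (x j))"
      using g by (intro nn_integral_multc borel_measurable_times_ennreal) auto
    then show "(\<integral>\<^sup>+t. f (x(i := t)) * (\<Prod>j\<in>insert i I. g j ((x(i := t)) j)) \<partial>M i)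
        = (\<integral>\<^sup>+t. f (x(i := t)) * g i t \<partial>M i) * (\<Prod>j\<in>I. g j (x j))"
      by (simp only: prod_insert_fun_upd[OF assms(1,2)] mult.assoc)
  qed
  finally show ?thesis ..
qed

text \<open>Given the covariates the labels are independent, so integrating them out replaces each
  factor \<open>\<phi> i\<close> by its conditional expectation \<open>probit_cond\<close>.\<close>

lemma nn_integral_PiM_probit_pair:
  fixes \<beta> :: "real^'d"
  assumes "finite I" "f \<in> borel_measurable (PiM I (\<lambda>_. gauss_vec))"
    and [measurable]: "\<And>i. \<phi> i \<in> borel_measurable borel"
  shows "(\<integral>\<^sup>+\<omega>. f (\<lambda>i\<in>I. fst (\<omega> i)) * (\<Prod>i\<in>I. \<phi> i (\<omega> i)) \<partial>PiM I (\<lambda>_. probit_pair \<beta>0 \<beta>))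
       = (\<integral>\<^sup>+x. f x * (\<Prod>i\<in>I. probit_cond \<beta>0 \<beta> (\<phi> i) (x i)) \<partial>PiM I (\<lambda>_. gauss_vec))"
  using assms(1,2)
proof (induction I arbitrary: f rule: finite_induct)
  case empty
  then show ?case by (simp add: PiM_empty nn_integral_count_space_finite)
next
  case (insert i I)
  let ?P = "probit_pair \<beta>0 \<beta>" and ?G = "gauss_vec :: (real^'d) measure"
  let ?\<psi> = "\<lambda>j. probit_cond \<beta>0 \<beta> (\<phi> j)"
  note [measurable] = insert.prems measurable_restrict_fst
  note upd = borel_measurable_fun_upd[OF insert.prems insert.hyps(2)]
  interpret P: product_sigma_finite "\<lambda>_. ?P"
    unfolding product_sigma_finite_def using prob_space_imp_sigma_finite[OF prob_space_probit_pair] by blast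
  interpret G: product_sigma_finite "\<lambda>_. ?G"
    unfolding product_sigma_finite_def using prob_space_imp_sigma_finite[OF prob_space_gauss_vec] by blast
  define f' where "f' x = (\<integral>\<^sup>+t. f (x(i := t)) * ?\<psi> i t \<partial>?G)" for x
  have [measurable]: "f' \<in> borel_measurable (PiM I (\<lambda>_. ?G))"
    unfolding f'_def[abs_def] using insert.hyps by (intro G.borel_measurable_nn_integral) measurable
  have "(\<integral>\<^sup>+\<omega>. f (\<lambda>j\<in>insert i I. fst (\<omega> j)) * (\<Prod>j\<in>insert i I. \<phi> j (\<omega> j)) \<partial>PiM (insert i I) (\<lambda>_. ?P))
      = (\<integral>\<^sup>+\<omega>. \<integral>\<^sup>+y. f (\<lambda>j\<in>insert i I. fst (fun_upd \<omega> i y j)) * (\<Prod>j\<in>insert i I. \<phi> j (fun_upd \<omega> i y j))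
           \<partial>?P \<partial>PiM I (\<lambda>_. ?P))"
    by (rule P.product_nn_integral_insert[OF insert.hyps]) measurable
  also have "\<dots> = (\<integral>\<^sup>+\<omega>. f' (\<lambda>j\<in>I. fst (\<omega> j)) * (\<Prod>j\<in>I. \<phi> j (\<omega> j)) \<partial>PiM I (\<lambda>_. ?P))"
  proof (intro nn_integral_cong)
    fix \<omega> :: "'a \<Rightarrow> (real^'d) \<times> real"
    define x where "x = (\<lambda>j\<in>I. fst (\<omega> j))"
    have x: "x \<in> space (PiM I (\<lambda>_. ?G))" by (simp add: x_def space_PiM)
    have [measurable]: "(\<lambda>y. f (x(i := fst y))) \<in> borel_measurable ?P"
      using measurable_fst_probit_pair upd[OF x] by (rule measurable_compose)
    have "(\<lambda>j\<in>insert i I. fst (fun_upd \<omega> i y j)) = x(i := fst y)" for y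
      by (auto simp: x_def fun_eq_iff)
    then have "(\<integral>\<^sup>+y. f (\<lambda>j\<in>insert i I. fst (fun_upd \<omega> i y j)) * (\<Prod>j\<in>insert i I. \<phi> j (fun_upd \<omega> i y j)) \<partial>?P)
        = (\<integral>\<^sup>+y. f (x(i := fst y)) * \<phi> i y \<partial>?P) * (\<Prod>j\<in>I. \<phi> j (\<omega> j))"
      by (simp only: prod_insert_fun_upd[OF insert.hyps] mult.assoc[symmetric])
        (rule nn_integral_multc, measurable)
    also have "(\<integral>\<^sup>+y. f (x(i := fst y)) * \<phi> i y \<partial>?P) = f' x"
      unfolding f'_def by (rule nn_integral_probit_pair_fst[OF upd[OF x]]) measurable
    finally show "(\<integral>\<^sup>+y. f (\<lambda>j\<in>insert i I. fst (fun_upd \<omega> i y j)) * (\<Prod>j\<in>insert i I. \<phi> j (fun_upd \<omega> i y j)) \<partial>?P)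
        = f' x * (\<Prod>j\<in>I. \<phi> j (\<omega> j))" .
  qed
  also have "\<dots> = (\<integral>\<^sup>+x. f' x * (\<Prod>j\<in>I. ?\<psi> j (x j)) \<partial>PiM I (\<lambda>_. ?G))"
    by (rule insert.IH) measurable
  also have "\<dots> = (\<integral>\<^sup>+x. f x * (\<Prod>j\<in>insert i I. ?\<psi> j (x j)) \<partial>PiM (insert i I) (\<lambda>_. ?G))"
    unfolding f'_def using insert.hyps insert.prems
    by (rule G.nn_integral_PiM_insert_prod) (simp cong: measurable_cong_sets)
  finally show ?case .
qed

lemma bernoulli_mgf_le_exp:
  fixes h l :: real
  assumes "0 \<le> h" "h \<le> 1" "0 \<le> l"
  shows "1 - (1 - exp (- l)) * h \<le> exp (l\<^sup>2 / 8 - l * h)"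
proof -
  have pos: "0 < 1 + (1 - h) * (exp l - 1)"
    using assms by (intro add_pos_nonneg) auto
  have "ln (1 + (1 - h) * (exp l - 1)) \<le> l\<^sup>2 / 8 + l * (1 - h)"
    using Hoeffdings_lemma_aux[of l "1 - h"] assms by simp
  then have "1 + (1 - h) * (exp l - 1) \<le> exp (l\<^sup>2 / 8 + l * (1 - h))"
    using pos by (subst ln_le_cancel_iff[symmetric]) auto
  then have "exp (- l) * (1 + (1 - h) * (exp l - 1)) \<le> exp (- l) * exp (l\<^sup>2 / 8 + l * (1 - h))"
    by (intro mult_left_mono) auto
  moreover have "exp (- l) * (1 + (1 - h) * (exp l - 1)) = 1 - (1 - exp (- l)) * h"
    by (simp add: algebra_simps exp_minus field_simps)
  moreover have "exp (- l) * exp (l\<^sup>2 / 8 + l * (1 - h)) = exp (l\<^sup>2 / 8 - l * h)"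
    by (simp add: exp_add[symmetric] algebra_simps)
  ultimately show ?thesis by simp
qed

lemma one_minus_mult_nonneg:
  fixes a h :: real
  assumes "0 \<le> a" "a \<le> 1" "0 \<le> h" "h \<le> 1"
  shows "0 \<le> 1 - a * h"
  using mult_mono[OF assms(2,4)] assms by simp

text \<open>The exponent \<open>l = 4 (\<epsilon> + \<delta>)\<close> is the minimiser of the Chernoff bound below.\<close>

lemma chernoff_bound_le:
  fixes h \<epsilon> \<delta> N :: real and n :: nat
  assumes "0 \<le> h" "h \<le> 1" "0 < \<epsilon>" "0 \<le> \<delta>" "0 \<le> N" "N \<le> exp (2 * real n * \<delta>\<^sup>2)"
  defines "l \<equiv> 4 * (\<epsilon> + \<delta>)"
  shows "exp (l * (real n * (h - \<epsilon> - \<delta>))) * N * (1 - (1 - exp (- l)) * h) ^ n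
           \<le> exp (- 2 * \<epsilon>\<^sup>2 * real n)"
proof -
  have l: "0 \<le> l" using assms by (simp add: l_def)
  have b: "0 \<le> 1 - (1 - exp (- l)) * h"
    using assms l by (intro one_minus_mult_nonneg) auto
  have "(1 - (1 - exp (- l)) * h) ^ n \<le> exp (l\<^sup>2 / 8 - l * h) ^ n"
    using assms l b by (intro power_mono bernoulli_mgf_le_exp) auto
  also have "\<dots> = exp (real n * (l\<^sup>2 / 8 - l * h))" by (simp add: exp_of_nat_mult)
  finally have "exp (l * (real n * (h - \<epsilon> - \<delta>))) * N * (1 - (1 - exp (- l)) * h) ^ n
      \<le> exp (l * (real n * (h - \<epsilon> - \<delta>))) * exp (2 * real n * \<delta>\<^sup>2) * exp (real n * (l\<^sup>2 / 8 - l * h))"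
    using assms b by (intro mult_mono) auto
  also have "\<dots> = exp (- 2 * \<epsilon>\<^sup>2 * real n - real n * (4 * \<epsilon> * \<delta>))"
    by (simp add: exp_add[symmetric] l_def power2_eq_square algebra_simps)
  also have "\<dots> \<le> exp (- 2 * \<epsilon>\<^sup>2 * real n)"
    using assms by simp
  finally show ?thesis .
qed

lemma growth_bound_le_exp:
  fixes n D :: nat
  assumes "1 \<le> D" "D \<le> n"
  defines "\<delta> \<equiv> sqrt (2 * ln (exp 1 * real n / real D) / (real n / real D))"
  shows "(exp 1 * real n / real D) ^ D \<le> exp (2 * real n * \<delta>\<^sup>2)" "0 \<le> \<delta>"
proof -
  define L where "L = ln (exp 1 * real n / real D)"
  have nD: "1 \<le> real n / real D" using assms by auto
  have "exp 1 * 1 \<le> exp 1 * (real n / real D)" using nD by (intro mult_left_mono) auto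
  then have L: "1 \<le> L" unfolding L_def by (subst ln_ge_iff) (use assms in auto)
  then show "0 \<le> \<delta>" using nD unfolding \<delta>_def L_def[symmetric] by simp
  have "(exp 1 * real n / real D) ^ D = exp (real D * L)"
    unfolding L_def using assms by (subst exp_of_nat_mult) simp
  also have "\<dots> \<le> exp (4 * real D * L)"
    using L by simp
  also have "4 * real D * L = 2 * real n * \<delta>\<^sup>2"
    unfolding \<delta>_def L_def[symmetric] using L assms by (simp add: field_simps)
  finally show "(exp 1 * real n / real D) ^ D \<le> exp (2 * real n * \<delta>\<^sup>2)" .
qed

section \<open>Exponential moments over sign patterns\<close>

definition halfspace_pattern :: "nat \<Rightarrow> (nat \<Rightarrow> real^'d) \<Rightarrow> real \<times> (real^'d) \<Rightarrow> nat set" where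
  "halfspace_pattern n x u = {i\<in>{..<n}. 0 < (1, x i) \<bullet> u}"

text \<open>Index \<open>i\<close> is predicted positive iff \<open>i \<in> S\<close>.  For the pattern \<open>S\<close> of a direction \<open>d\<close>,
  every mismatch is a point with \<open>y\<^sub>i ((1, x\<^sub>i) \<bullet> d) \<le> 0\<close>, i.e. misclassified by \<open>d\<close>.\<close>

definition mismatch :: "nat set \<Rightarrow> nat \<Rightarrow> 'a \<times> real \<Rightarrow> bool" where
  "mismatch S i p \<longleftrightarrow> (i \<in> S \<and> snd p \<le> 0) \<or> (i \<notin> S \<and> 0 \<le> snd p)"

definition mismatch_weight :: "real \<Rightarrow> nat set \<Rightarrow> nat \<Rightarrow> 'a \<times> real \<Rightarrow> ennreal" where
  "mismatch_weight l S i p = (if mismatch S i p then ennreal (exp (- l)) else 1)"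

text \<open>Sum of \<open>exp (- l * #mismatches)\<close> over the sign patterns realised by directions in \<open>Dn\<close>;
  taking \<open>Dn\<close> countable (rather than the whole sphere) makes this a random variable.\<close>

definition pattern_stat ::
    "(real \<times> (real^'d)) set \<Rightarrow> real \<Rightarrow> nat \<Rightarrow> (nat \<Rightarrow> (real^'d) \<times> real) \<Rightarrow> ennreal" where
  "pattern_stat Dn l n \<omega> = (\<Sum>S\<in>Pow {..<n}.
     of_bool (S \<in> halfspace_pattern n (\<lambda>i\<in>{..<n}. fst (\<omega> i)) ` Dn) *
     (\<Prod>i<n. mismatch_weight l S i (\<omega> i)))"

lemma card_halfspace_pattern_image_le:
  fixes x :: "nat \<Rightarrow> real^'d"
  assumes "CARD('d) < n"
  shows "real (card (halfspace_pattern n x ` Dn))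
           \<le> (exp 1 * real n / real (CARD('d) + 1)) ^ (CARD('d) + 1)"
proof -
  let ?F = "{{i\<in>{..<n}. 0 < (1::real, x i) \<bullet> u} | u. True}"
  have "finite ?F" by (rule finite_subset[of _ "Pow {..<n}"]) auto
  moreover have "halfspace_pattern n x ` Dn \<subseteq> ?F"
    unfolding halfspace_pattern_def by blast
  ultimately have "card (halfspace_pattern n x ` Dn) \<le> card ?F"
    by (rule card_mono)
  also have "real (card ?F) \<le> (exp 1 * real n / real DIM(real \<times> (real^'d))) ^ DIM(real \<times> (real^'d))"
    using card_halfspace_patterns_le[of "{..<n}" "\<lambda>i. (1::real, x i)"] assms by simp
  finally show ?thesis by simp
qed

lemma prob_space_probit_sample: "prob_space (probit_sample n \<beta>0 \<beta>)"
  unfolding probit_sample_def by (intro prob_space_PiM prob_space_probit_pair)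

lemma pred_halfspace_pattern_image [measurable]:
  fixes S :: "nat set" and Dn :: "(real \<times> (real^'d)) set"
  assumes "countable Dn"
  shows "Measurable.pred (PiM {..<n} (\<lambda>_. gauss_vec)) (\<lambda>x. S \<in> halfspace_pattern n x ` Dn)"
proof -
  let ?M = "PiM {..<n} (\<lambda>_. gauss_vec :: (real^'d) measure)"
  have pred_d: "Measurable.pred ?M (\<lambda>x. S = halfspace_pattern n x d)" for d
  proof cases
    assume "S \<subseteq> {..<n}"
    then have "(S = halfspace_pattern n x d) \<longleftrightarrow> (\<forall>i\<in>{..<n}. i \<in> S \<longleftrightarrow> 0 < (1, x i) \<bullet> d)" for x
      by (auto simp: halfspace_pattern_def)
    moreover have "(\<lambda>x. (1::real, x i) \<bullet> d) \<in> borel_measurable ?M" if "i \<in> {..<n}" for i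
      using that by (intro measurable_compose[OF measurable_component_singleton]) (auto cong: measurable_cong_sets)
    ultimately show ?thesis by simp measurable
  next
    assume "\<not> S \<subseteq> {..<n}"
    then have "(\<lambda>x. S = halfspace_pattern n x d) = (\<lambda>_. False)"
      by (auto simp: halfspace_pattern_def)
    then show ?thesis by simp
  qed
  have "{x\<in>space ?M. \<exists>d\<in>Dn. S = halfspace_pattern n x d} \<in> sets ?M"
    using pred_d unfolding pred_def by (rule sets.sets_Collect_countable_Ex'[OF _ assms])
  then show ?thesis by (simp add: pred_def image_iff)
qed

lemma borel_measurable_mismatch_weight [measurable]:
  "mismatch_weight l S i \<in> borel_measurable (borel :: ('a::second_countable_topology \<times> real) measure)"
proof -
  have [measurable]: "snd \<in> borel_measurable (borel :: ('a \<times> real) measure)"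
    by (simp add: borel_prod[symmetric])
  show ?thesis unfolding mismatch_weight_def[abs_def] mismatch_def by measurable
qed

lemma borel_measurable_pattern_stat [measurable]:
  fixes \<beta> :: "real^'d"
  assumes "countable Dn"
  shows "pattern_stat Dn l n \<in> borel_measurable (probit_sample n \<beta>0 \<beta>)"
proof -
  note [measurable] = measurable_compose[OF measurable_restrict_fst pred_halfspace_pattern_image[OF assms]]
  show ?thesis
    unfolding pattern_stat_def[abs_def] probit_sample_def by measurable
qed

lemma probit_cond_mismatch_weight_le:
  fixes \<beta> :: "real^'d"
  assumes "0 \<le> l"
  shows "probit_cond \<beta>0 \<beta> (mismatch_weight l S i) t
           \<le> ennreal (1 - (1 - exp (- l)) * Phi (- \<bar>\<beta>0 + t \<bullet> \<beta>\<bar>))"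
proof -
  define p where "p = Phi (\<beta>0 + t \<bullet> \<beta>)"
  define q where "q = Phi (- \<bar>\<beta>0 + t \<bullet> \<beta>\<bar>)"
  have p: "0 \<le> p" "p \<le> 1" by (auto simp: p_def Phi_nonneg Phi_le_1)
  have q: "q \<le> p" "q \<le> 1 - p" using Phi_minus_abs_le by (auto simp: p_def q_def)
  have e: "0 < exp (- l)" "exp (- l) \<le> 1" using assms by auto
  show ?thesis
  proof (cases "i \<in> S")
    case True
    then have "probit_cond \<beta>0 \<beta> (mismatch_weight l S i) t = ennreal (p + exp (- l) * (1 - p))"
      using p e by (simp add: probit_cond_def mismatch_weight_def mismatch_def p_def ennreal_mult' ennreal_plus)
    also have "\<dots> \<le> ennreal (1 - (1 - exp (- l)) * q)"
      using mult_left_mono[OF q(2), of "1 - exp (- l)"] e by (intro ennreal_leI) (simp add: algebra_simps)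
    finally show ?thesis by (simp add: q_def)
  next
    case False
    then have "probit_cond \<beta>0 \<beta> (mismatch_weight l S i) t = ennreal (exp (- l) * p + (1 - p))"
      using p e by (simp add: probit_cond_def mismatch_weight_def mismatch_def p_def ennreal_mult' ennreal_plus)
    also have "\<dots> \<le> ennreal (1 - (1 - exp (- l)) * q)"
      using mult_left_mono[OF q(1), of "1 - exp (- l)"] e by (intro ennreal_leI) (simp add: algebra_simps)
    finally show ?thesis by (simp add: q_def)
  qed
qed

lemma integral_std_normal_Phi_bounds:
  assumes [measurable]: "f \<in> borel_measurable borel"
  shows "0 \<le> (\<integral>z. Phi (f z) \<partial>std_normal)" "(\<integral>z. Phi (f z) \<partial>std_normal) \<le> 1"
proof -
  interpret S: prob_space std_normal by (rule prob_space_std_normal)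
  show "0 \<le> (\<integral>z. Phi (f z) \<partial>std_normal)" by (simp add: Phi_nonneg)
  show "(\<integral>z. Phi (f z) \<partial>std_normal) \<le> 1"
    by (intro S.integral_le_const S.integrable_const_bound[where B = 1]) (auto simp: Phi_nonneg Phi_le_1)
qed

lemma nn_integral_gauss_vec_one_minus_Phi:
  fixes \<beta> :: "real^'d" and a :: real
  assumes "0 \<le> a" "a \<le> 1"
  shows "(\<integral>\<^sup>+t. ennreal (1 - a * Phi (- \<bar>\<beta>0 + t \<bullet> \<beta>\<bar>)) \<partial>gauss_vec)
           = ennreal (1 - a * (\<integral>z. Phi (- \<bar>\<beta>0 + norm \<beta> * z\<bar>) \<partial>std_normal))"
proof -
  interpret G: prob_space "gauss_vec :: (real^'d) measure" by (rule prob_space_gauss_vec)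
  have int: "integrable gauss_vec (\<lambda>t. Phi (- \<bar>\<beta>0 + t \<bullet> \<beta>\<bar>))"
    by (intro G.integrable_const_bound[where B = 1]) (auto simp: Phi_nonneg Phi_le_1 cong: measurable_cong_sets)
  have "(\<integral>\<^sup>+t. ennreal (1 - a * Phi (- \<bar>\<beta>0 + t \<bullet> \<beta>\<bar>)) \<partial>gauss_vec)
      = ennreal (\<integral>t. 1 - a * Phi (- \<bar>\<beta>0 + t \<bullet> \<beta>\<bar>) \<partial>gauss_vec)"
    using int assms by (intro nn_integral_eq_integral AE_I2) (auto intro!: mult_le_one Phi_nonneg Phi_le_1)
  also have "(\<integral>t. 1 - a * Phi (- \<bar>\<beta>0 + t \<bullet> \<beta>\<bar>) \<partial>gauss_vec) = 1 - a * (\<integral>t. Phi (- \<bar>\<beta>0 + t \<bullet> \<beta>\<bar>) \<partial>gauss_vec)"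
    using int G.prob_space by simp
  also have "(\<integral>t. Phi (- \<bar>\<beta>0 + t \<bullet> \<beta>\<bar>) \<partial>gauss_vec) = (\<integral>z. Phi (- \<bar>\<beta>0 + norm \<beta> * z\<bar>) \<partial>std_normal)"
    using integral_gauss_vec_inner[of "\<lambda>s. Phi (- \<bar>\<beta>0 + s\<bar>)" \<beta>] by simp
  finally show ?thesis .
qed

lemma sum_pattern_cond_le:
  fixes \<beta> :: "real^'d" and x :: "nat \<Rightarrow> real^'d"
  assumes "0 \<le> l" "CARD('d) < n"
  shows "(\<Sum>S\<in>Pow {..<n}. of_bool (S \<in> halfspace_pattern n x ` Dn) *
            (\<Prod>i<n. probit_cond \<beta>0 \<beta> (mismatch_weight l S i) (x i)))
         \<le> ennreal ((exp 1 * real n / real (CARD('d) + 1)) ^ (CARD('d) + 1)) *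
            (\<Prod>i<n. ennreal (1 - (1 - exp (- l)) * Phi (- \<bar>\<beta>0 + x i \<bullet> \<beta>\<bar>)))"
    (is "_ \<le> ennreal ?N * ?g")
proof -
  have "(\<Sum>S\<in>Pow {..<n}. of_bool (S \<in> halfspace_pattern n x ` Dn) *
          (\<Prod>i<n. probit_cond \<beta>0 \<beta> (mismatch_weight l S i) (x i)))
      \<le> (\<Sum>S\<in>Pow {..<n}. of_bool (S \<in> halfspace_pattern n x ` Dn) * ?g)"
    using assms(1) by (intro sum_mono mult_left_mono prod_mono_ennreal probit_cond_mismatch_weight_le) auto
  also have "\<dots> = of_nat (card (halfspace_pattern n x ` Dn)) * ?g"
  proof -
    have "halfspace_pattern n x ` Dn \<subseteq> Pow {..<n}" by (auto simp: halfspace_pattern_def)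
    then have "Pow {..<n} \<inter> {S. S \<in> halfspace_pattern n x ` Dn} = halfspace_pattern n x ` Dn" by blast
    then show ?thesis by (simp add: sum_distrib_right[symmetric] sum.If_cases of_bool_def)
  qed
  also have "\<dots> \<le> ennreal ?N * ?g"
    using card_halfspace_pattern_image_le[OF assms(2), of x Dn]
    by (intro mult_right_mono) (auto simp: ennreal_of_nat_eq_real_of_nat ennreal_leI)
  finally show ?thesis .
qed

lemma nn_integral_pattern_stat_le:
  fixes \<beta>0 :: real and \<beta> :: "real^'d"
  assumes "countable Dn" "0 \<le> l" "CARD('d) < n"
  defines "h \<equiv> \<integral>z. Phi (- \<bar>\<beta>0 + norm \<beta> * z\<bar>) \<partial>std_normal"
  shows "(\<integral>\<^sup>+\<omega>. pattern_stat Dn l n \<omega> \<partial>probit_sample n \<beta>0 \<beta>)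
           \<le> ennreal ((exp 1 * real n / real (CARD('d) + 1)) ^ (CARD('d) + 1) * (1 - (1 - exp (- l)) * h) ^ n)"
proof -
  let ?G = "PiM {..<n} (\<lambda>_. gauss_vec :: (real^'d) measure)"
  let ?N = "(exp 1 * real n / real (CARD('d) + 1)) ^ (CARD('d) + 1)"
  define g where "g t = ennreal (1 - (1 - exp (- l)) * Phi (- \<bar>\<beta>0 + t \<bullet> \<beta>\<bar>))" for t :: "real^'d"
  interpret G: product_sigma_finite "\<lambda>_. gauss_vec :: (real^'d) measure"
    unfolding product_sigma_finite_def using prob_space_imp_sigma_finite[OF prob_space_gauss_vec] by blast
  have [measurable]: "g \<in> borel_measurable gauss_vec"
    unfolding g_def[abs_def] by (simp cong: measurable_cong_sets)
  have [measurable]: "Measurable.pred ?G (\<lambda>x. S \<in> halfspace_pattern n x ` Dn)" for S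
    using assms(1) by (rule pred_halfspace_pattern_image)
  have "(\<integral>\<^sup>+\<omega>. pattern_stat Dn l n \<omega> \<partial>probit_sample n \<beta>0 \<beta>)
      = (\<Sum>S\<in>Pow {..<n}. \<integral>\<^sup>+x. of_bool (S \<in> halfspace_pattern n x ` Dn) *
          (\<Prod>i<n. probit_cond \<beta>0 \<beta> (mismatch_weight l S i) (x i)) \<partial>?G)"
    unfolding pattern_stat_def probit_sample_def
    using measurable_compose[OF measurable_restrict_fst pred_halfspace_pattern_image[OF assms(1)]]
    by (subst nn_integral_sum) (auto intro!: sum.cong nn_integral_PiM_probit_pair)
  also have "\<dots> = (\<integral>\<^sup>+x. (\<Sum>S\<in>Pow {..<n}. of_bool (S \<in> halfspace_pattern n x ` Dn) *
          (\<Prod>i<n. probit_cond \<beta>0 \<beta> (mismatch_weight l S i) (x i))) \<partial>?G)"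
    by (subst nn_integral_sum) auto
  also have "\<dots> \<le> (\<integral>\<^sup>+x. ennreal ?N * (\<Prod>i<n. g (x i)) \<partial>?G)"
    unfolding g_def by (intro nn_integral_mono sum_pattern_cond_le assms)
  also have "\<dots> = ennreal ?N * (\<integral>\<^sup>+t. g t \<partial>gauss_vec) ^ n"
  proof -
    have "(\<integral>\<^sup>+x. (\<Prod>i<n. g (x i)) \<partial>?G) = (\<Prod>i<n. \<integral>\<^sup>+t. g t \<partial>gauss_vec)"
      by (rule G.product_nn_integral_prod) auto
    then show ?thesis by (subst nn_integral_cmult) auto
  qed
  also have "(\<integral>\<^sup>+t. g t \<partial>gauss_vec) = ennreal (1 - (1 - exp (- l)) * h)"
    unfolding g_def h_def using assms(2) by (intro nn_integral_gauss_vec_one_minus_Phi) auto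
  also have "ennreal ?N * ennreal (1 - (1 - exp (- l)) * h) ^ n
      = ennreal (?N * (1 - (1 - exp (- l)) * h) ^ n)"
  proof -
    have "0 \<le> 1 - (1 - exp (- l)) * h"
      using integral_std_normal_Phi_bounds[of "\<lambda>z. - \<bar>\<beta>0 + norm \<beta> * z\<bar>"] assms(2)
      by (intro one_minus_mult_nonneg) (auto simp: h_def)
    then show ?thesis by (subst ennreal_power, assumption, subst ennreal_mult'[symmetric]) simp_all
  qed
  finally show ?thesis .
qed

lemma measure_pattern_stat_ge_le:
  fixes \<beta>0 :: real and \<beta> :: "real^'d"
  assumes "countable Dn" "0 \<le> l" "CARD('d) < n"
  defines "h \<equiv> \<integral>z. Phi (- \<bar>\<beta>0 + norm \<beta> * z\<bar>) \<partial>std_normal"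
  shows "measure (probit_sample n \<beta>0 \<beta>)
           {\<omega>\<in>space (probit_sample n \<beta>0 \<beta>). 1 \<le> ennreal (exp a) * pattern_stat Dn l n \<omega>}
         \<le> exp a * (exp 1 * real n / real (CARD('d) + 1)) ^ (CARD('d) + 1) * (1 - (1 - exp (- l)) * h) ^ n"
proof -
  let ?\<Omega> = "probit_sample n \<beta>0 \<beta>"
  interpret \<Omega>: prob_space ?\<Omega> by (rule prob_space_probit_sample)
  note [measurable] = borel_measurable_pattern_stat[OF assms(1)]
  have "emeasure ?\<Omega> {\<omega>\<in>space ?\<Omega>. 1 \<le> ennreal (exp a) * pattern_stat Dn l n \<omega>}
      \<le> ennreal (exp a) * (\<integral>\<^sup>+\<omega>. pattern_stat Dn l n \<omega> * indicator (space ?\<Omega>) \<omega> \<partial>?\<Omega>)"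
    by (intro nn_integral_Markov_inequality) measurable
  also have "(\<integral>\<^sup>+\<omega>. pattern_stat Dn l n \<omega> * indicator (space ?\<Omega>) \<omega> \<partial>?\<Omega>) = (\<integral>\<^sup>+\<omega>. pattern_stat Dn l n \<omega> \<partial>?\<Omega>)"
    by (intro nn_integral_cong) simp
  also have "ennreal (exp a) * \<dots> \<le> ennreal (exp a) *
      ennreal ((exp 1 * real n / real (CARD('d) + 1)) ^ (CARD('d) + 1) * (1 - (1 - exp (- l)) * h) ^ n)"
    using nn_integral_pattern_stat_le[OF assms(1-3), of \<beta>0 \<beta>, folded h_def] by (rule mult_left_mono) simp
  finally have "ennreal (measure ?\<Omega> {\<omega>\<in>space ?\<Omega>. 1 \<le> ennreal (exp a) * pattern_stat Dn l n \<omega>})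
      \<le> ennreal (exp a * (exp 1 * real n / real (CARD('d) + 1)) ^ (CARD('d) + 1) * (1 - (1 - exp (- l)) * h) ^ n)"
    by (simp only: \<Omega>.emeasure_eq_measure ennreal_mult'[symmetric] exp_ge_zero mult.assoc)
  moreover have "0 \<le> 1 - (1 - exp (- l)) * h"
    using integral_std_normal_Phi_bounds[of "\<lambda>z. - \<bar>\<beta>0 + norm \<beta> * z\<bar>"] assms(2)
    by (intro one_minus_mult_nonneg) (auto simp: h_def)
  ultimately show ?thesis by simp
qed

lemma exists_dense_sign_refinement:
  fixes a :: "'i \<Rightarrow> 'v::real_inner" and y :: "'i \<Rightarrow> real"
  assumes "finite I" and dense: "\<And>X. open X \<Longrightarrow> X \<noteq> {} \<Longrightarrow> \<exists>d\<in>Dn. d \<in> X"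
  obtains d where "d \<in> Dn" "{i\<in>I. y i * (a i \<bullet> d) \<le> 0} \<subseteq> {i\<in>I. y i * (a i \<bullet> u) \<le> 0}"
proof -
  define X where "X = (\<Inter>i\<in>{i\<in>I. 0 < y i * (a i \<bullet> u)}. {v. 0 < y i * (a i \<bullet> v)})"
  have "open X" unfolding X_def using assms(1)
    by (intro open_INT ballI open_Collect_less continuous_intros) auto
  moreover have "u \<in> X" by (simp add: X_def)
  ultimately obtain d where d: "d \<in> Dn" "d \<in> X" using dense by blast
  have "y i * (a i \<bullet> u) \<le> 0" if "i \<in> I" "y i * (a i \<bullet> d) \<le> 0" for i
  proof (rule ccontr)
    assume "\<not> y i * (a i \<bullet> u) \<le> 0"
    then have "d \<in> {v. 0 < y i * (a i \<bullet> v)}" using d(2) that(1) unfolding X_def by auto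
    then show False using that(2) by simp
  qed
  with d(1) show ?thesis by (intro that) auto
qed

lemma sstar_lessE:
  fixes \<omega> :: "nat \<Rightarrow> (real^'d) \<times> real"
  assumes "sstar n \<omega> < c"
  obtains u :: "real \<times> (real^'d)"
    where "real (card {i\<in>{..<n}. snd (\<omega> i) * ((1, fst (\<omega> i)) \<bullet> u) \<le> 0}) < c"
proof -
  let ?err = "\<lambda>u. real (card {i\<in>{..<n}. snd (\<omega> i) * ((1::real, fst (\<omega> i)) \<bullet> u) \<le> 0})"
  have "(1, 0) \<in> sphere (0 :: real \<times> (real^'d)) 1" by simp
  then have "sphere (0 :: real \<times> (real^'d)) 1 \<noteq> {}" by blast
  moreover have "bdd_below (?err ` sphere 0 1)"
    by (intro bdd_belowI[of _ 0]) auto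
  moreover have "(INF u\<in>sphere 0 1. ?err u) < c"
    using assms unfolding sstar_def .
  ultimately show ?thesis
    using cINF_less_iff[of "sphere 0 1" ?err c] that by blast
qed

lemma mismatch_halfspace_pattern:
  assumes "i < n" "mismatch (halfspace_pattern n x d) i p"
  shows "snd p * ((1, x i) \<bullet> d) \<le> 0"
  using assms by (auto simp: mismatch_def halfspace_pattern_def mult_le_0_iff)

lemma prod_mismatch_weight:
  "(\<Prod>i<n. mismatch_weight l S i (\<omega> i)) = ennreal (exp (- l)) ^ card {i\<in>{..<n}. mismatch S i (\<omega> i)}"
  unfolding mismatch_weight_def by (simp add: prod.inter_filter[symmetric])

lemma prod_mismatch_weight_le_pattern_stat:
  assumes "d \<in> Dn"
  shows "(\<Prod>i<n. mismatch_weight l (halfspace_pattern n (\<lambda>i\<in>{..<n}. fst (\<omega> i)) d) i (\<omega> i))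
           \<le> pattern_stat Dn l n \<omega>"
proof -
  let ?x = "\<lambda>i\<in>{..<n}. fst (\<omega> i)"
  define w where "w S = of_bool (S \<in> halfspace_pattern n ?x ` Dn) * (\<Prod>i<n. mismatch_weight l S i (\<omega> i))"
    for S
  have "halfspace_pattern n ?x d \<in> Pow {..<n}" by (auto simp: halfspace_pattern_def)
  then have "w (halfspace_pattern n ?x d) \<le> sum w (Pow {..<n})" by (rule member_le_sum) auto
  then show ?thesis using assms by (simp add: pattern_stat_def w_def)
qed

lemma one_le_pattern_stat:
  fixes \<omega> :: "nat \<Rightarrow> (real^'d) \<times> real" and Dn :: "(real \<times> (real^'d)) set"
  assumes dense: "\<And>X. open X \<Longrightarrow> X \<noteq> {} \<Longrightarrow> \<exists>d\<in>Dn. d \<in> X"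
    and "0 \<le> l" and "sstar n \<omega> < c"
  shows "1 \<le> ennreal (exp (l * c)) * pattern_stat Dn l n \<omega>"
proof -
  let ?err = "\<lambda>u. {i\<in>{..<n}. snd (\<omega> i) * ((1::real, fst (\<omega> i)) \<bullet> u) \<le> 0}"
  obtain u where u: "real (card (?err u)) < c"
    using assms(3) by (rule sstar_lessE)
  obtain d where d: "d \<in> Dn" "?err d \<subseteq> ?err u"
    using exists_dense_sign_refinement[OF finite_lessThan dense,
        where y = "\<lambda>i. snd (\<omega> i)" and a = "\<lambda>i. (1, fst (\<omega> i))" and u = u]
    by blast
  define S where "S = halfspace_pattern n (\<lambda>i\<in>{..<n}. fst (\<omega> i)) d"
  define E where "E = {i\<in>{..<n}. mismatch S i (\<omega> i)}"
  have "E \<subseteq> ?err d"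
  proof
    fix i assume "i \<in> E"
    then have i: "i < n" "mismatch S i (\<omega> i)" by (auto simp: E_def)
    from mismatch_halfspace_pattern[OF i[unfolded S_def]] i(1) show "i \<in> ?err d" by simp
  qed
  with d(2) have "card E \<le> card (?err u)" by (intro card_mono) auto
  with u have "real (card E) < c" by linarith
  then have "1 \<le> exp (l * (c - real (card E)))"
    using assms(2) by simp
  also have "\<dots> = exp (l * c) * exp (- l) ^ card E"
    by (simp add: exp_of_nat_mult[symmetric] exp_add[symmetric] algebra_simps)
  finally have "1 \<le> ennreal (exp (l * c) * exp (- l) ^ card E)"
    using ennreal_leI[of 1] by simp
  also have "\<dots> = ennreal (exp (l * c)) * (\<Prod>i<n. mismatch_weight l S i (\<omega> i))"
    by (simp add: ennreal_mult' ennreal_power prod_mismatch_weight E_def)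
  also have "\<dots> \<le> ennreal (exp (l * c)) * pattern_stat Dn l n \<omega>"
    using prod_mismatch_weight_le_pattern_stat[OF d(1)] by (simp add: S_def mult_left_mono)
  finally show ?thesis .
qed

theorem theorem2p5:
  fixes n :: nat and \<beta>0 :: real and \<beta> :: "real^'d" and \<epsilon> :: real
  assumes "n > CARD('d)" and "\<epsilon> > 0"
  defines "h \<equiv> integral\<^sup>L std_normal (\<lambda>z. Phi (- \<bar>\<beta>0 + norm \<beta> * z\<bar>))"
  shows "\<exists>A\<in>sets (probit_sample n \<beta>0 \<beta>).
           A \<subseteq> {\<omega>\<in>space (probit_sample n \<beta>0 \<beta>).
                  sstar n \<omega> \<ge> real n * (h - \<epsilon> -
                     sqrt (2 * ln (exp 1 * real n / real (CARD('d) + 1)) / (real n / real (CARD('d) + 1))))}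
         \<and> measure (probit_sample n \<beta>0 \<beta>) A \<ge> 1 - exp (- 2 * \<epsilon>\<^sup>2 * real n)"
proof -
  define N where "N = (exp 1 * real n / real (CARD('d) + 1)) ^ (CARD('d) + 1)"
  define \<delta> where "\<delta> = sqrt (2 * ln (exp 1 * real n / real (CARD('d) + 1)) / (real n / real (CARD('d) + 1)))"
  define l where "l = 4 * (\<epsilon> + \<delta>)"
  define c where "c = real n * (h - \<epsilon> - \<delta>)"
  let ?\<Omega> = "probit_sample n \<beta>0 \<beta>"
  have \<delta>: "N \<le> exp (2 * real n * \<delta>\<^sup>2)" "0 \<le> \<delta>"
    using growth_bound_le_exp[of "CARD('d) + 1" n, folded N_def \<delta>_def] assms(1) by auto
  have l: "0 \<le> l" using \<delta> assms(2) by (simp add: l_def)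
  have h: "0 \<le> h" "h \<le> 1"
    unfolding h_def by (rule integral_std_normal_Phi_bounds, measurable)+
  obtain Dn :: "(real \<times> (real^'d)) set"
    where Dn: "countable Dn" "\<And>X. open X \<Longrightarrow> X \<noteq> {} \<Longrightarrow> \<exists>d\<in>Dn. d \<in> X"
    using countable_dense_setE by blast
  define B where "B = {\<omega>\<in>space ?\<Omega>. 1 \<le> ennreal (exp (l * c)) * pattern_stat Dn l n \<omega>}"
  have "B \<in> sets ?\<Omega>"
    unfolding B_def using borel_measurable_pattern_stat[OF Dn(1)] by measurable
  moreover have "measure ?\<Omega> B \<le> exp (l * c) * N * (1 - (1 - exp (- l)) * h) ^ n"
    unfolding B_def N_def h_def using Dn(1) l assms(1) by (rule measure_pattern_stat_ge_le)
  moreover have "exp (l * c) * N * (1 - (1 - exp (- l)) * h) ^ n \<le> exp (- 2 * \<epsilon>\<^sup>2 * real n)"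
    using chernoff_bound_le[OF h assms(2) \<delta>(2) _ \<delta>(1)] by (simp add: c_def l_def N_def)
  moreover have "space ?\<Omega> - B \<subseteq> {\<omega>\<in>space ?\<Omega>. c \<le> sstar n \<omega>}"
    using one_le_pattern_stat[OF Dn(2) l] by (force simp: B_def)
  ultimately show ?thesis
    using prob_space.prob_compl[OF prob_space_probit_sample] unfolding c_def \<delta>_def
    by (intro bexI[of _ "space ?\<Omega> - B"]) force+
qed

end
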